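(* Let $q$ be a prime power, $n\ge 1$, and let $M$ be an $n\times n$ matrix with entries in $\mathbb{F}_{q^2}$ which is not of the form $c\,\mathbb{I}_{n\times n}$ for any $c\in\mathbb{F}_{q^2}$. Then $\sharp(\mathrm{Num}_0(M))\ge \lceil (q+1)/2\rceil$.
   Context: For $u=(u_1,\dots,u_n),v=(v_1,\dots,v_n)\in\mathbb{F}_{q^2}^n$ set $\langle u,v\rangle=\sum_{i=1}^n u_i^q v_i$ (the standard Hermitian form; note $\langle u,u\rangle\in\mathbb{F}_q$). For an $n\times n$ matrix $M$ over $\mathbb{F}_{q^2}$, $\mathrm{Num}_0(M)=\{\langle u,Mu\rangle : u\in\mathbb{F}_{q^2}^n,\ \langle u,u\rangle=0\}\subseteq\mathbb{F}_{q^2}$. $\mathbb{I}_{n\times n}$ is the identity matrix. *)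

theory Defs
  imports "HOL-Analysis.Analysis" "HOL-Computational_Algebra.Primes"
begin

definition herm :: "nat \<Rightarrow> ('a::field) ^ 'n \<Rightarrow> 'a ^ 'n \<Rightarrow> 'a" where
  "herm q u v = (\<Sum>i\<in>UNIV. (u $ i) ^ q * v $ i)"

definition Num0 :: "nat \<Rightarrow> ('a::field) ^ 'n ^ 'n \<Rightarrow> 'a set" where
  "Num0 q M = {herm q u (M *v u) | u. herm q u u = 0}"

end

theory Submission
  imports Defs "HOL-Computational_Algebra.Polynomial"
begin

text \<open>
  Let \<open>N(y) = y\<^sup>q\<^sup>+\<^sup>1\<close> be the norm from the field with \<open>q\<^sup>2\<close> elements to its subfield with \<open>q\<close>
  elements. From \<open>\<langle>\<lambda>u, \<lambda>v\<rangle> = N(\<lambda>) \<langle>u, v\<rangle>\<close>, \<open>Num\<^sub>0(M)\<close> is stable under multiplication by the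
  \<open>q\<close> values of \<open>N\<close>, so one nonzero element already gives \<open>q \<ge> \<lceil>(q + 1) / 2\<rceil>\<close> elements.
  If \<open>Num\<^sub>0(M) = {0}\<close>, then for \<open>i \<noteq> j\<close> and each of the \<open>q + 1\<close> solutions of \<open>N(y) = -1\<close> the
  isotropic vector \<open>e\<^sub>i + y e\<^sub>j\<close> shows that \<open>y\<close> is a root of \<open>(M\<^sub>i\<^sub>i - M\<^sub>j\<^sub>j) + M\<^sub>i\<^sub>j y + M\<^sub>j\<^sub>i y\<^sup>q\<close>, a polynomial
  of degree at most \<open>q\<close>; hence it vanishes and \<open>M\<close> is scalar.
\<close>

lemma field_power_card_minus_one:
  fixes x :: "'a::{field,finite}"
  assumes "x \<noteq> 0"
  shows "x ^ (CARD('a) - 1) = 1"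
proof -
  have "(\<Prod>y\<in>UNIV - {0}. x * y) = (\<Prod>y\<in>UNIV - {0}. y)"
    by (rule prod.reindex_bij_witness[of _ "\<lambda>y. y / x" "\<lambda>y. x * y"]) (use assms in auto)
  moreover have "(\<Prod>y\<in>UNIV - {0}. x * y) = x ^ (CARD('a) - 1) * (\<Prod>y\<in>UNIV - {0::'a}. y)"
    by (simp add: prod.distrib card_Diff_subset)
  ultimately show ?thesis by simp
qed

lemma of_nat_card_eq_0: "(of_nat CARD('a) :: 'a::{ring_1,finite}) = 0"
proof -
  have "(\<Sum>y\<in>UNIV. y + 1) = (\<Sum>y\<in>UNIV. y :: 'a)"
    by (rule sum.reindex_bij_witness[of _ "\<lambda>y. y - 1" "\<lambda>y. y + 1"]) auto
  then show ?thesis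
    by (simp add: sum.distrib)
qed

lemma minus_one_power_pred:
  assumes "prime p" "CARD('a::{field,finite}) = p ^ m" "q = p ^ k"
  shows "(-1::'a) ^ (q - 1) = 1"
proof (cases "p = 2")
  case True
  then have "(2::'a) ^ m = 0"
    using of_nat_card_eq_0[where 'a='a] assms(2) by simp
  then have "(2::'a) = 0"
    by simp
  then have "(-1::'a) = 1"
    by (metis add_eq_0_iff2 one_add_one)
  then show ?thesis
    by (metis power_one)
next
  case False
  then have "odd p"
    using assms(1) prime_odd_nat prime_ge_2_nat le_neq_implies_less by metis
  then have "odd q"
    using assms(3) by simp
  then show ?thesis by simp
qed

lemma card_roots_power_le:
  fixes c :: "'a::idom"
  assumes "m \<ge> 1"
  shows "card {y. y ^ m = c} \<le> m"
proof -
  define p where "p = monom (1::'a) m + [:-c:]"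
  have "degree p = m"
    unfolding p_def using assms by (subst degree_add_eq_left) (auto simp: degree_monom_eq)
  moreover have "{y. y ^ m = c} = {x. poly p x = 0}"
    by (auto simp: p_def poly_monom)
  ultimately show ?thesis
    using card_poly_roots_bound[of p] assms by (cases "p = 0") auto
qed

lemma poly_eq_0_if_card_roots_gt_degree:
  fixes p :: "'a::idom poly"
  assumes "\<forall>x\<in>S. poly p x = 0" and "degree p < card S"
  shows "p = 0"
proof (rule ccontr)
  assume "p \<noteq> 0"
  then have "card S \<le> card {x. poly p x = 0}"
    using assms(1) poly_roots_finite by (intro card_mono) auto
  then show False
    using card_poly_roots_bound[OF \<open>p \<noteq> 0\<close>] assms(2) by simp
qed

lemma card_fibres_eq_if_tight:
  assumes "finite A" "finite T" "f ` A \<subseteq> T" "card T \<le> t"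
    and fibre_le: "\<And>c. c \<in> T \<Longrightarrow> card {x\<in>A. f x = c} \<le> b"
    and "t * b \<le> card A" "b > 0"
  shows "card T = t" and "\<And>c. c \<in> T \<Longrightarrow> card {x\<in>A. f x = c} = b"
proof -
  have sum_eq: "(\<Sum>c\<in>T. card {x\<in>A. f x = c}) = card A"
    using sum.group[OF assms(1-3), of "\<lambda>_. 1::nat"] by simp
  have sum_le: "(\<Sum>c\<in>T. card {x\<in>A. f x = c}) \<le> card T * b"
    using sum_bounded_above[of T _ b] fibre_le by simp
  moreover have "card T * b \<le> t * b"
    using assms(4) by simp
  ultimately have "card T * b = t * b"
    using sum_eq assms(6) by linarith
  then show "card T = t"
    using \<open>b > 0\<close> by simp
  show "card {x\<in>A. f x = c} = b" if "c \<in> T" for c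
  proof (rule ccontr)
    assume "card {x\<in>A. f x = c} \<noteq> b"
    with fibre_le that have "card {x\<in>A. f x = c} < b"
      by (simp add: order_less_le)
    then have "(\<Sum>c\<in>T. card {x\<in>A. f x = c}) < (\<Sum>c\<in>T. b)"
      using fibre_le that by (intro sum_strict_mono_ex1) (auto simp: assms(2))
    then show False
      using sum_eq \<open>card T * b = t * b\<close> assms(6) by simp
  qed
qed

lemma norm_power_pred_eq_1:
  fixes y :: "'a::{field,finite}"
  assumes "CARD('a) = q ^ 2" and "y \<noteq> 0"
  shows "(y ^ (q + 1)) ^ (q - 1) = 1"
proof -
  have "q ^ 2 - 1 = (q + 1) * (q - 1)"
    by (simp add: power2_eq_square algebra_simps)
  then have "(y ^ (q + 1)) ^ (q - 1) = y ^ (CARD('a) - 1)"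
    by (simp only: assms(1) power_mult)
  also have "\<dots> = 1"
    using field_power_card_minus_one[OF assms(2)] .
  finally show ?thesis .
qed

text \<open>\<open>{c. c\<^sup>q\<^sup>-\<^sup>1 = 1}\<close> is the multiplicative group of the subfield with \<open>q\<close> elements; the norm
  maps the nonzero elements onto it, \<open>(q + 1)\<close>-to-one.\<close>
lemma norm_fibres:
  assumes card_a: "CARD('a::{field,finite}) = q ^ 2" and "q \<ge> 2"
  shows card_norm_values: "card {c::'a. c ^ (q - 1) = 1} = q - 1"
    and card_norm_fibre: "\<And>c::'a. c ^ (q - 1) = 1 \<Longrightarrow> card {y. y ^ (q + 1) = c} = q + 1"
proof -
  let ?A = "UNIV - {0::'a}" and ?T = "{c::'a. c ^ (q - 1) = 1}"
  have maps_to: "(\<lambda>y. y ^ (q + 1)) ` ?A \<subseteq> ?T"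
    using norm_power_pred_eq_1[OF card_a] by auto
  have fibre: "{y \<in> ?A. y ^ (q + 1) = c} = {y. y ^ (q + 1) = c}" if "c \<in> ?T" for c
    using that \<open>q \<ge> 2\<close> by (auto simp: power_0_left)
  have "card ?A = q ^ 2 - 1"
    by (simp add: card_Diff_subset card_a)
  also have "\<dots> = (q - 1) * (q + 1)"
    by (simp add: power2_eq_square algebra_simps)
  finally have card_A: "(q - 1) * (q + 1) \<le> card ?A"
    by simp
  have "card ?T \<le> q - 1"
    using \<open>q \<ge> 2\<close> by (intro card_roots_power_le) simp
  moreover have "card {y \<in> ?A. y ^ (q + 1) = c} \<le> q + 1" if "c \<in> ?T" for c
    using fibre[OF that] card_roots_power_le[of "q + 1" c] by simp
  ultimately have "card ?T = q - 1" and "c \<in> ?T \<Longrightarrow> card {y \<in> ?A. y ^ (q + 1) = c} = q + 1" for c :: 'a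
    using card_fibres_eq_if_tight[OF _ _ maps_to _ _ card_A] by auto
  then show "card ?T = q - 1" and "c ^ (q - 1) = 1 \<Longrightarrow> card {y. y ^ (q + 1) = c} = q + 1" for c :: 'a
    using fibre by auto
qed

lemma card_range_norm:
  assumes "CARD('a::{field,finite}) = q ^ 2" and "q \<ge> 2"
  shows "card (range (\<lambda>y::'a. y ^ (q + 1))) = q"
proof -
  have "range (\<lambda>y::'a. y ^ (q + 1)) = insert 0 {c. c ^ (q - 1) = 1}"
  proof (intro equalityI subsetI)
    fix c :: 'a
    assume c: "c \<in> insert 0 {c. c ^ (q - 1) = 1}"
    obtain y where "c = y ^ (q + 1)"
    proof (cases "c = 0")
      case False
      then have "card {y. y ^ (q + 1) = c} \<noteq> 0"
        using c card_norm_fibre[OF assms] by simp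
      then show ?thesis
        using that by (metis (mono_tags) card.empty empty_Collect_eq)
    qed (use that[of 0] in simp)
    then show "c \<in> range (\<lambda>y. y ^ (q + 1))"
      by (rule range_eqI)
  qed (use norm_power_pred_eq_1[OF assms(1)] in auto)
  moreover have "(0::'a) \<notin> {c. c ^ (q - 1) = 1}"
    using assms(2) by (simp add: power_0_left)
  ultimately show ?thesis
    using card_norm_values[OF assms] assms(2) by simp
qed

lemma herm_axis_plus_axis:
  fixes v :: "'a::field ^ 'n"
  assumes "i \<noteq> j" and "q \<ge> 1"
  shows "herm q (axis i a + axis j b) v = a ^ q * v $ i + b ^ q * v $ j"
proof -
  have "((axis i a + axis j b) $ k) ^ q * v $ k
      = (if k = i then a ^ q * v $ i else 0) + (if k = j then b ^ q * v $ j else 0)" for k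
    using assms by (auto simp: axis_def zero_power)
  then show ?thesis
    unfolding herm_def by (simp add: sum.distrib)
qed

lemma axis_nth_neq: "i \<noteq> k \<Longrightarrow> axis k x $ i = 0"
  by (simp add: axis_def)

lemma matrix_vector_mult_axis_nth: "(M *v axis i a) $ k = M $ k $ i * (a::'a::semiring_1)"
  by (simp add: matrix_vector_mult_def axis_def if_distrib cong: if_cong)

lemma herm_scale_both:
  fixes u v :: "'a::field ^ 'n"
  shows "herm q (c *s u) (c *s v) = c ^ (q + 1) * herm q u v"
  by (simp add: herm_def sum_distrib_left power_mult_distrib mult_ac)

lemma Num0_mult_norm:
  assumes "z \<in> Num0 q M"
  shows "l ^ (q + 1) * z \<in> Num0 q M"
proof -
  obtain u where "herm q u u = 0" and "z = herm q u (M *v u)"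
    using assms unfolding Num0_def by blast
  then have "herm q (l *s u) (l *s u) = 0" and "l ^ (q + 1) * z = herm q (l *s u) (M *v (l *s u))"
    by (simp_all add: herm_scale_both vector_scalar_commute)
  then show ?thesis
    unfolding Num0_def by blast
qed

lemma Num0_subset_zero_imp_entries:
  fixes M :: "'a::field ^ 'n ^ 'n"
  assumes "q \<ge> 2" and "q < card {y::'a. y ^ (q + 1) = -1}"
    and "Num0 q M \<subseteq> {0}" and "i \<noteq> j"
  shows "M $ i $ j = 0 \<and> M $ j $ i = 0 \<and> M $ i $ i = M $ j $ j"
proof -
  define p where "p = [:M $ i $ i - M $ j $ j, M $ i $ j:] + monom (M $ j $ i) q"
  have roots: "\<forall>y \<in> {y. y ^ (q + 1) = -1}. poly p y = 0"
  proof
    fix y :: 'a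
    assume "y \<in> {y. y ^ (q + 1) = -1}"
    then have norm_y: "y ^ q * y = -1"
      by (simp add: mult.commute)
    let ?u = "axis i 1 + axis j y"
    have "herm q ?u ?u = 0"
      using assms(1,4) norm_y by (simp add: herm_axis_plus_axis axis_nth_neq)
    then have "herm q ?u (M *v ?u) = 0"
      using assms(3) unfolding Num0_def by blast
    moreover have "herm q ?u (M *v ?u)
        = M $ i $ i + M $ i $ j * y + y ^ q * M $ j $ i + (y ^ q * y) * M $ j $ j"
      using assms(1,4)
      by (simp add: herm_axis_plus_axis matrix_vector_right_distrib matrix_vector_mult_axis_nth
          axis_nth_neq algebra_simps)
    moreover have "poly p y
        = M $ i $ i + M $ i $ j * y + y ^ q * M $ j $ i + (y ^ q * y) * M $ j $ j"
      unfolding norm_y by (simp add: p_def poly_monom algebra_simps)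
    ultimately show "poly p y = 0"
      by metis
  qed
  have "degree p \<le> q"
    unfolding p_def using assms(1)
    by (intro degree_add_le) (auto simp: degree_monom_le intro: order_trans[OF degree_pCons_le])
  then have "degree p < card {y::'a. y ^ (q + 1) = -1}"
    using assms(2) by linarith
  with roots have "p = 0"
    by (rule poly_eq_0_if_card_roots_gt_degree)
  then have "coeff p 0 = 0" "coeff p 1 = 0" "coeff p q = 0"
    by simp_all
  then show ?thesis
    using assms(1) by (simp add: p_def coeff_monom)
qed

lemma Num0_subset_zero_imp_scalar:
  fixes M :: "'a::field ^ 'n ^ 'n"
  assumes "q \<ge> 2" and "q < card {y::'a. y ^ (q + 1) = -1}" and "Num0 q M \<subseteq> {0}"
  shows "\<exists>c. M = mat c"
proof -
  fix i0 :: 'n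
  note entries = Num0_subset_zero_imp_entries[OF assms]
  have "M $ i $ i = M $ i0 $ i0" for i
    using entries[of i i0] by (cases "i = i0") simp_all
  moreover have "M $ i $ j = 0" if "i \<noteq> j" for i j
    using entries[OF that] by simp
  ultimately have "M = mat (M $ i0 $ i0)"
    by (simp add: vec_eq_iff mat_def)
  then show ?thesis ..
qed

lemma card_range_norm_le_card_Num0:
  fixes M :: "'a::{field,finite} ^ 'n ^ 'n"
  assumes "a \<in> Num0 q M" and "a \<noteq> 0"
  shows "card (range (\<lambda>y::'a. y ^ (q + 1))) \<le> card (Num0 q M)"
proof -
  have "(\<lambda>c. c * a) ` range (\<lambda>y. y ^ (q + 1)) \<subseteq> Num0 q M"
    using Num0_mult_norm[OF assms(1)] by auto
  moreover have "inj_on (\<lambda>c. c * a) (range (\<lambda>y. y ^ (q + 1)))"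
    using assms(2) by (auto simp: inj_on_def)
  ultimately show ?thesis
    by (metis card_image card_mono finite)
qed

theorem corollary1:
  fixes M :: "('a::{field,finite}) ^ 'n ^ 'n" and q :: nat
  assumes "\<exists>p k. prime p \<and> k \<ge> 1 \<and> q = p ^ k"
    and "CARD('a) = q ^ 2"
    and "\<forall>c. M \<noteq> mat c"
  shows "of_nat (card (Num0 q M)) \<ge> \<lceil>(real q + 1) / 2\<rceil>"
proof -
  obtain p k where p: "prime p" and "k \<ge> 1" and q: "q = p ^ k"
    using assms(1) by blast
  have "p \<le> q"
    unfolding q using prime_gt_0_nat[OF p] \<open>k \<ge> 1\<close> by (simp add: self_le_power)
  then have "q \<ge> 2"
    using prime_ge_2_nat[OF p] by linarith
  have "(-1::'a) ^ (q - 1) = 1"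
    using minus_one_power_pred[OF p _ q] assms(2) by (simp add: q power_mult[symmetric])
  then have "q < card {y::'a. y ^ (q + 1) = -1}"
    using card_norm_fibre[OF assms(2) \<open>q \<ge> 2\<close>] by simp
  then obtain a where "a \<in> Num0 q M" and "a \<noteq> 0"
    using Num0_subset_zero_imp_scalar[OF \<open>q \<ge> 2\<close>] assms(3) by blast
  then have "q \<le> card (Num0 q M)"
    using card_range_norm_le_card_Num0 card_range_norm[OF assms(2) \<open>q \<ge> 2\<close>] by metis
  moreover have "\<lceil>(real q + 1) / 2\<rceil> \<le> int q"
    using \<open>q \<ge> 2\<close> by (simp add: ceiling_le_iff)
  ultimately show ?thesis
    by linarith
qed

end
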